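(* Let $X$ be a random variable with values in $[-1,1]$ whose distribution has a density $f$ with respect to Lebesgue measure satisfying $f(x)=f(-x)$ for all $x\in[-1,1]$ and $f$ strictly increasing on $[0,1]$. Let $X_1,X_2,X_3$ be independent copies of $X$ and $F(a,b,c)=\mathbb E\bigl(\log(a^2(1-X_1)+b^2(1-X_2)+c^2(1-X_3))\bigr)$. Then for any nonzero $\varkappa\in\mathbb R$ and any real $a,b,c$ with $a+b+c=0$ and $a^2+b^2+c^2=2\varkappa^2$, $$F(a,b,c)\ge F(0,\varkappa,-\varkappa).$$ Moreover the inequality is strict whenever $a,b,c\ne0$ and $F(0,\varkappa,-\varkappa)>-\infty$. *)

theory Defs
  imports "HOL-Probability.Probability"
begin

text \<open>It is well defined whenever at
  least one of the two parts is finite (in the application the positive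
  part is bounded, so the value lies in [-infinity, infinity)).\<close>
definition ext_expectation :: "'a measure \<Rightarrow> ('a \<Rightarrow> real) \<Rightarrow> ereal" where
  "ext_expectation M g =
     enn2ereal (\<integral>\<^sup>+ \<omega>. ennreal (g \<omega>) \<partial>M) - enn2ereal (\<integral>\<^sup>+ \<omega>. ennreal (- g \<omega>) \<partial>M)"

definition Flog :: "'a measure \<Rightarrow> (nat \<Rightarrow> 'a \<Rightarrow> real) \<Rightarrow> real \<Rightarrow> real \<Rightarrow> real \<Rightarrow> ereal" where
  "Flog M X a b c = ext_expectation M
     (\<lambda>\<omega>. ln (a\<^sup>2 * (1 - X 0 \<omega>) + b\<^sup>2 * (1 - X 1 \<omega>) + c\<^sup>2 * (1 - X 2 \<omega>)))"

end

theory Submission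
  imports Defs "HOL-Real_Asymp.Real_Asymp"
begin

(* For 0 < z <= A, Frullani's integral gives
     ln A - ln z = int_0^oo (exp (-t z) - exp (-t A)) / t dt.
   Applied to the argument Z of the logarithm (with A = 4 kappa^2 >= Z), F(a,b,c) becomes ln A
   minus an integral over t > 0 of E exp (-t Z) - exp (-t A), so it suffices to show that
   E exp (-t Z) is largest at (0, kappa, -kappa). By independence
     E exp (-t Z) = exp (K u1 + K u2 + K u3 - 2 T),
   where K is the cumulant generating function of X, (u1, u2, u3) = (t a^2, t b^2, t c^2) and
   T = t kappa^2. Because a + b + c = 0, these u_i have the same sum 2 T and the same sum of
   squares 2 T^2 as the triple (0, T, T), and for such triples K u1 + K u2 + K u3 <= K 0 + 2 K T
   holds whenever K''' < 0 on (0, oo), strictly if all u_i > 0. Finally K''' u is the third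
   cumulant of the exponentially tilted density f x exp (u x), which is negative for u > 0:
   reflected about its mean, this density becomes smaller on the side towards 1, because f is
   symmetric and increasing in |x|. *)

section \<open>Frullani's integral and the extended expectation\<close>

lemma nn_integral_exp_neg_mult_Ioi:
  fixes s :: real
  assumes "0 < s"
  shows "(\<integral>\<^sup>+t. ennreal (exp (- t * s)) * indicator {0<..} t \<partial>lborel) = ennreal (1 / s)"
proof -
  have "(\<integral>\<^sup>+t. ennreal (exp (- t * s)) * indicator {0<..} t \<partial>lborel)
      = (\<integral>\<^sup>+t. ennreal (exp (- t * s)) * indicator {0..} t \<partial>lborel)"
    using AE_lborel_singleton[of 0]
    by (intro nn_integral_cong_AE) (auto elim!: eventually_mono split: split_indicator)
  also have "\<dots> = ennreal (0 - (- exp (- 0 * s) / s))"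
  proof (rule nn_integral_FTC_atLeast)
    show "DERIV (\<lambda>t. - exp (- t * s) / s) x :> exp (- x * s)" for x
      using assms by (auto intro!: derivative_eq_intros)
    show "((\<lambda>t. - exp (- t * s) / s) \<longlongrightarrow> 0) at_top"
      using assms by real_asymp
  qed auto
  finally show ?thesis
    by simp
qed

lemma frullani_exp:
  fixes z A :: real
  assumes "0 < z" and "z \<le> A"
  shows "(\<integral>\<^sup>+t. ennreal ((exp (- t * z) - exp (- t * A)) / t) * indicator {0<..} t \<partial>lborel)
    = ennreal (ln A - ln z)"
proof -
  have inner: "ennreal ((exp (- t * z) - exp (- t * A)) / t)
      = (\<integral>\<^sup>+s. ennreal (exp (- t * s)) * indicator {z..A} s \<partial>lborel)" if "0 < t" for t
  proof -
    have "(\<integral>\<^sup>+s. ennreal (exp (- t * s)) * indicator {z..A} s \<partial>lborel)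
        = ennreal (- exp (- t * A) / t - - exp (- t * z) / t)"
      using that assms by (intro nn_integral_FTC_Icc) (auto intro!: derivative_eq_intros)
    then show ?thesis
      by (simp add: diff_divide_distrib)
  qed
  have "(\<integral>\<^sup>+t. ennreal ((exp (- t * z) - exp (- t * A)) / t) * indicator {0<..} t \<partial>lborel)
      = (\<integral>\<^sup>+t. (\<integral>\<^sup>+s. ennreal (exp (- t * s)) * indicator {z..A} s * indicator {0<..} t \<partial>lborel) \<partial>lborel)"
    using inner by (intro nn_integral_cong) (auto split: split_indicator)
  also have "\<dots> = (\<integral>\<^sup>+s. (\<integral>\<^sup>+t. ennreal (exp (- t * s)) * indicator {z..A} s * indicator {0<..} t \<partial>lborel) \<partial>lborel)"
    by (intro lborel_pair.Fubini' [symmetric]) measurable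
  also have "\<dots> = (\<integral>\<^sup>+s. ennreal (1 / s) * indicator {z..A} s \<partial>lborel)"
  proof (intro nn_integral_cong)
    fix s :: real
    show "(\<integral>\<^sup>+t. ennreal (exp (- t * s)) * indicator {z..A} s * indicator {0<..} t \<partial>lborel)
        = ennreal (1 / s) * indicator {z..A} s"
      using assms nn_integral_exp_neg_mult_Ioi[of s] by (cases "s \<in> {z..A}") auto
  qed
  also have "\<dots> = ennreal (ln A - ln z)"
    using assms by (intro nn_integral_FTC_Icc) (auto intro!: derivative_eq_intros)
  finally show ?thesis .
qed

lemma ennreal_bounded_above_identity:
  fixes x C :: real
  assumes "x \<le> C"
  shows "ennreal x + ennreal (C - x) + ennreal (- C) = ennreal C + ennreal (- x)"
  using assms by (auto simp: ennreal_plus_if)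

lemma ext_expectation_bounded_above:
  assumes "prob_space M" and [measurable]: "g \<in> borel_measurable M"
    and bound: "AE \<omega> in M. g \<omega> \<le> C"
  shows "ext_expectation M g = ereal C - enn2ereal (\<integral>\<^sup>+\<omega>. ennreal (C - g \<omega>) \<partial>M)"
proof -
  interpret prob_space M by fact
  define P Q R where "P = (\<integral>\<^sup>+\<omega>. ennreal (g \<omega>) \<partial>M)" and "Q = (\<integral>\<^sup>+\<omega>. ennreal (- g \<omega>) \<partial>M)"
    and "R = (\<integral>\<^sup>+\<omega>. ennreal (C - g \<omega>) \<partial>M)"
  have "P + R + ennreal (- C) = (\<integral>\<^sup>+\<omega>. ennreal (g \<omega>) + ennreal (C - g \<omega>) + ennreal (- C) \<partial>M)"
    by (simp add: P_def R_def nn_integral_add emeasure_space_1)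
  also have "\<dots> = (\<integral>\<^sup>+\<omega>. ennreal C + ennreal (- g \<omega>) \<partial>M)"
    using bound
    by (intro nn_integral_cong_AE) (auto elim!: eventually_mono intro: ennreal_bounded_above_identity)
  also have "\<dots> = ennreal C + Q"
    by (simp add: Q_def nn_integral_add emeasure_space_1)
  finally have "enn2ereal P + enn2ereal R + max 0 (ereal (- C)) = max 0 (ereal C) + enn2ereal Q"
    by (metis ennreal.rep_eq plus_ennreal.rep_eq sup_ereal_def)
  moreover have "P \<le> (\<integral>\<^sup>+\<omega>. ennreal C \<partial>M)"
    unfolding P_def using bound
    by (intro nn_integral_mono_AE) (auto elim!: eventually_mono intro: ennreal_leI)
  then have "enn2ereal P \<le> max 0 (ereal C)"
    by (metis emeasure_space_1 ennreal.rep_eq less_eq_ennreal.rep_eq mult.right_neutral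
        nn_integral_const sup_ereal_def)
  ultimately show ?thesis
    unfolding ext_expectation_def P_def[symmetric] Q_def[symmetric] R_def[symmetric]
    using enn2ereal_nonneg[of Q] enn2ereal_nonneg[of R] enn2ereal_nonneg[of P]
    by (cases "enn2ereal P"; cases "enn2ereal Q"; cases "enn2ereal R"; cases "0 \<le> C")
      (auto simp: max_def split: if_splits)
qed

section \<open>Functions with negative third derivative\<close>

lemma DERIV_pos_imp_less:
  fixes f f' :: "real \<Rightarrow> real"
  assumes "\<And>x. DERIV f x :> f' x" and "a < b" and "\<And>x. a < x \<Longrightarrow> x < b \<Longrightarrow> 0 < f' x"
  shows "f a < f b"
proof -
  obtain z where "a < z" "z < b" "f b - f a = (b - a) * f' z"
    using MVT2[of a b f f'] assms(1,2) by blast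
  moreover have "0 < (b - a) * f' z"
    using assms(2,3) \<open>a < z\<close> \<open>z < b\<close> by simp
  ultimately show ?thesis
    by simp
qed

lemma DERIV_neg_imp_greater:
  fixes f f' :: "real \<Rightarrow> real"
  assumes "\<And>x. DERIV f x :> f' x" and "a < b" and "\<And>x. a < x \<Longrightarrow> x < b \<Longrightarrow> f' x < 0"
  shows "f b < f a"
  using DERIV_pos_imp_less[of "\<lambda>x. - f x" "\<lambda>x. - f' x" a b] assms
  by (auto intro: derivative_intros)

lemma DERIV_zero_between:
  fixes f f' :: "real \<Rightarrow> real"
  assumes "\<And>x. DERIV f x :> f' x" and "a < b" and "f a = f b"
  obtains z where "a < z" "z < b" "f' z = 0"
  using MVT2[of a b f f'] assms by auto

lemma neg_of_third_deriv_neg: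
  fixes g g' g'' g''' :: "real \<Rightarrow> real"
  assumes d1: "\<And>x. DERIV g x :> g' x" and d2: "\<And>x. DERIV g' x :> g'' x"
    and d3: "\<And>x. DERIV g'' x :> g''' x" and neg3: "\<And>x. 0 < x \<Longrightarrow> g''' x < 0"
    and T: "0 < T" and g0: "g 0 = 0" and gT: "g T = 0" and g'T: "g' T = 0"
    and v: "0 < v" "v \<noteq> T"
  shows "g v < 0"
proof -
  obtain \<xi> where \<xi>: "0 < \<xi>" "\<xi> < T" "g' \<xi> = 0"
    using DERIV_zero_between[OF d1 T] g0 gT by metis
  obtain \<eta> where \<eta>: "\<xi> < \<eta>" "\<eta> < T" "g'' \<eta> = 0"
    using DERIV_zero_between[OF d2 \<xi>(2)] \<xi>(3) g'T by metis
  have g''_pos: "0 < g'' x" if "0 \<le> x" "x < \<eta>" for x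
    using DERIV_neg_imp_greater[OF d3 that(2)] neg3 that(1) \<eta>(3) by force
  have g''_neg: "g'' x < 0" if "\<eta> < x" for x
    using DERIV_neg_imp_greater[OF d3 that] neg3 \<xi>(1) \<eta> by force
  have g'_neg_before: "g' x < 0" if "0 \<le> x" "x < \<xi>" for x
    using DERIV_pos_imp_less[OF d2 that(2)] g''_pos that(1) \<xi>(3) \<eta>(1) by force
  have g'_pos: "0 < g' x" if "\<xi> < x" "x < T" for x
  proof (cases "x \<le> \<eta>")
    case True
    then show ?thesis
      using DERIV_pos_imp_less[OF d2 that(1)] g''_pos \<xi>(1,3) by force
  next
    case False
    then show ?thesis
      using DERIV_neg_imp_greater[OF d2 that(2)] g''_neg g'T by force
  qed
  have g'_neg_after: "g' x < 0" if "T < x" for x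
    using DERIV_neg_imp_greater[OF d2 that] g''_neg \<eta>(2) g'T by force
  consider "v \<le> \<xi>" | "\<xi> < v" "v < T" | "T < v"
    using v by linarith
  then show ?thesis
  proof cases
    case 1
    then show ?thesis
      using DERIV_neg_imp_greater[OF d1 v(1)] g'_neg_before g0 by force
  next
    case 2
    then show ?thesis
      using DERIV_pos_imp_less[OF d1 2(2)] g'_pos gT by force
  next
    case 3
    then show ?thesis
      using DERIV_neg_imp_greater[OF d1 3] g'_neg_after gT by force
  qed
qed

text \<open>Subtract from \<open>K\<close> the quadratic \<open>\<beta> v + \<alpha> v\<^sup>2\<close> that agrees with \<open>K - K 0\<close>
  to first order at \<open>T\<close>; the two moment constraints make this quadratic sum to the same value
  over \<open>u\<^sub>1, u\<^sub>2, u\<^sub>3\<close> as over \<open>0, T, T\<close>.\<close>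

lemma sum3_le_of_third_deriv_neg:
  fixes K K' K'' K''' :: "real \<Rightarrow> real"
  assumes d1: "\<And>x. DERIV K x :> K' x" and d2: "\<And>x. DERIV K' x :> K'' x"
    and d3: "\<And>x. DERIV K'' x :> K''' x" and neg3: "\<And>x. 0 < x \<Longrightarrow> K''' x < 0"
    and T: "0 < T" and nonneg: "0 \<le> u1" "0 \<le> u2" "0 \<le> u3"
    and sum: "u1 + u2 + u3 = 2 * T" and sum_sq: "u1\<^sup>2 + u2\<^sup>2 + u3\<^sup>2 = 2 * T\<^sup>2"
  shows "K u1 + K u2 + K u3 \<le> K 0 + 2 * K T"
    and "0 < u1 \<Longrightarrow> 0 < u2 \<Longrightarrow> 0 < u3 \<Longrightarrow> K u1 + K u2 + K u3 < K 0 + 2 * K T"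
proof -
  define \<alpha> where "\<alpha> = (T * K' T - (K T - K 0)) / T\<^sup>2"
  define \<beta> where "\<beta> = (2 * (K T - K 0) - T * K' T) / T"
  define g where "g v = K v - K 0 - \<beta> * v - \<alpha> * v\<^sup>2" for v
  have neg: "g v < 0" if "0 < v" "v \<noteq> T" for v
  proof (rule neg_of_third_deriv_neg[where g' = "\<lambda>x. K' x - \<beta> - 2 * \<alpha> * x"
        and g'' = "\<lambda>x. K'' x - 2 * \<alpha>" and g''' = K''', OF _ _ _ neg3 T _ _ _ that])
    show "DERIV g x :> K' x - \<beta> - 2 * \<alpha> * x" for x
      unfolding g_def[abs_def] by (auto intro!: derivative_eq_intros d1)
    show "DERIV (\<lambda>x. K' x - \<beta> - 2 * \<alpha> * x) x :> K'' x - 2 * \<alpha>" for x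
      by (auto intro!: derivative_eq_intros d2)
    show "DERIV (\<lambda>x. K'' x - 2 * \<alpha>) x :> K''' x" for x
      by (auto intro!: derivative_eq_intros d3)
    show "g 0 = 0" "g T = 0" "K' T - \<beta> - 2 * \<alpha> * T = 0"
      using T by (simp_all add: g_def \<alpha>_def \<beta>_def field_simps power2_eq_square)
  qed
  have nonpos: "g v \<le> 0" if "0 \<le> v" for v
    using neg[of v] that T
    by (cases "v = 0 \<or> v = T") (auto simp: g_def \<alpha>_def \<beta>_def field_simps power2_eq_square)
  have "g u1 + g u2 + g u3
      = K u1 + K u2 + K u3 - 3 * K 0 - \<beta> * (u1 + u2 + u3) - \<alpha> * (u1\<^sup>2 + u2\<^sup>2 + u3\<^sup>2)"
    by (simp add: g_def algebra_simps)
  also have "\<dots> = K u1 + K u2 + K u3 - (K 0 + 2 * K T)"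
    using T unfolding sum sum_sq by (simp add: \<alpha>_def \<beta>_def field_simps power2_eq_square)
  finally have g_sum: "g u1 + g u2 + g u3 = K u1 + K u2 + K u3 - (K 0 + 2 * K T)" .
  moreover have "g u1 \<le> 0" "g u2 \<le> 0" "g u3 \<le> 0"
    using nonpos nonneg by auto
  ultimately show "K u1 + K u2 + K u3 \<le> K 0 + 2 * K T"
    by linarith
  assume "0 < u1" "0 < u2" "0 < u3"
  moreover have "u1 \<noteq> T \<or> u2 \<noteq> T \<or> u3 \<noteq> T"
    using sum T by auto
  ultimately have "g u1 < 0 \<or> g u2 < 0 \<or> g u3 < 0"
    using neg by blast
  then show "K u1 + K u2 + K u3 < K 0 + 2 * K T"
    using g_sum \<open>g u1 \<le> 0\<close> \<open>g u2 \<le> 0\<close> \<open>g u3 \<le> 0\<close> by linarith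
qed

section \<open>Exponential moments of a weight on \<open>[-1, 1]\<close>\<close>

lemma abs_exp_minus_one_minus_le:
  fixes z :: real
  assumes "\<bar>z\<bar> \<le> 1"
  shows "\<bar>exp z - 1 - z\<bar> \<le> 2 * z\<^sup>2"
proof -
  obtain t where t: "\<bar>t\<bar> \<le> \<bar>z\<bar>" "exp z = (\<Sum>m<2. z ^ m / fact m) + exp t / fact 2 * z\<^sup>2"
    using Maclaurin_exp_le[of z 2] by blast
  have "exp t \<le> exp 1"
    using t(1) assms by simp
  also have "exp (1::real) \<le> 4"
    using exp_le by simp
  finally have le: "exp t / 2 * z\<^sup>2 \<le> 2 * z\<^sup>2"
    by (intro mult_right_mono) simp_all
  have "exp z - 1 - z = exp t / 2 * z\<^sup>2"
    using t(2) by (simp add: numeral_2_eq_2)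
  moreover have "0 \<le> exp t / 2 * z\<^sup>2"
    by simp
  ultimately show ?thesis
    using le by (simp only: abs_of_nonneg)
qed

lemma exp_mult_le_exp_abs:
  fixes u x :: real
  assumes "\<bar>x\<bar> \<le> 1"
  shows "exp (u * x) \<le> exp \<bar>u\<bar>"
  using assms abs_ge_self[of "u * x"] mult_left_le[of "\<bar>x\<bar>" "\<bar>u\<bar>"] by (simp add: abs_mult)

lemma abs_difference_quotient_remainder_le:
  fixes h u x :: real
  assumes "h \<noteq> 0" and "\<bar>h\<bar> \<le> 1" and "\<bar>x\<bar> \<le> 1"
  shows "\<bar>x ^ k * exp (u * x) * ((exp (h * x) - 1 - h * x) / h)\<bar> \<le> 2 * exp \<bar>u\<bar> * \<bar>h\<bar>"
proof -
  have "\<bar>exp (h * x) - 1 - h * x\<bar> \<le> 2 * (h * x)\<^sup>2"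
    using assms by (intro abs_exp_minus_one_minus_le) (simp add: abs_mult mult_le_one)
  also have "\<dots> \<le> 2 * h\<^sup>2"
    using assms(3) by (simp add: power_mult_distrib abs_square_le_1 mult_left_le)
  finally have "\<bar>(exp (h * x) - 1 - h * x) / h\<bar> \<le> 2 * \<bar>h\<bar>"
    using assms(1) by (simp add: abs_divide divide_le_eq power2_eq_square abs_mult)
  moreover have "\<bar>x ^ k\<bar> \<le> 1"
    using assms(3) by (simp add: power_abs power_le_one)
  moreover have "exp (u * x) \<le> exp \<bar>u\<bar>"
    using assms(3) by (rule exp_mult_le_exp_abs)
  ultimately have "\<bar>x ^ k * exp (u * x) * ((exp (h * x) - 1 - h * x) / h)\<bar> \<le> 1 * exp \<bar>u\<bar> * (2 * \<bar>h\<bar>)"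
    unfolding abs_mult by (intro mult_mono) auto
  then show ?thesis
    by simp
qed

definition exp_moment :: "(real \<Rightarrow> real) \<Rightarrow> nat \<Rightarrow> real \<Rightarrow> real" where
  "exp_moment w k u = (\<integral>x. w x * x ^ k * exp (u * x) \<partial>lborel)"

locale unit_interval_weight =
  fixes w :: "real \<Rightarrow> real"
  assumes integrable_weight: "integrable lborel w"
    and weight_nonneg: "\<And>x. 0 \<le> w x"
    and weight_outside: "\<And>x. x \<notin> {-1..1} \<Longrightarrow> w x = 0"
begin

lemma borel_measurable_weight [measurable]: "w \<in> borel_measurable borel"
  using borel_measurable_integrable[OF integrable_weight] by simp

lemma weighted_bound:
  assumes "\<And>x. x \<in> {-1..1} \<Longrightarrow> \<bar>g x\<bar> \<le> B"
  shows "\<bar>w x * g x\<bar> \<le> B * w x"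
  using assms[of x] weight_nonneg[of x] weight_outside[of x]
  by (cases "x \<in> {-1..1}") (auto simp: abs_mult mult.commute[of B] intro: mult_left_mono)

lemma integrable_weighted:
  assumes [measurable]: "g \<in> borel_measurable borel"
    and "\<And>x. x \<in> {-1..1} \<Longrightarrow> \<bar>g x\<bar> \<le> B"
  shows "integrable lborel (\<lambda>x. w x * g x)"
proof (rule Bochner_Integration.integrable_bound)
  show "integrable lborel (\<lambda>x. B * w x)"
    using integrable_weight by simp
  show "AE x in lborel. norm (w x * g x) \<le> norm (B * w x)"
  proof (rule AE_I2)
    fix x
    have "\<bar>w x * g x\<bar> \<le> B * w x"
      by (rule weighted_bound[OF assms(2)])
    then show "norm (w x * g x) \<le> norm (B * w x)"
      unfolding real_norm_def by (rule order_trans[OF _ abs_ge_self])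
  qed
qed measurable

lemma abs_integral_weighted_le:
  assumes [measurable]: "g \<in> borel_measurable borel"
    and "\<And>x. x \<in> {-1..1} \<Longrightarrow> \<bar>g x\<bar> \<le> B"
  shows "\<bar>\<integral>x. w x * g x \<partial>lborel\<bar> \<le> B * (\<integral>x. w x \<partial>lborel)"
proof -
  have "\<bar>\<integral>x. w x * g x \<partial>lborel\<bar> \<le> (\<integral>x. \<bar>w x * g x\<bar> \<partial>lborel)"
    by (rule integral_abs_bound)
  also have "\<dots> \<le> (\<integral>x. B * w x \<partial>lborel)"
    using integrable_weighted[OF assms] integrable_weight
    by (intro integral_mono weighted_bound[OF assms(2)]) auto
  finally show ?thesis
    by simp
qed

lemma integrable_exp_moment: "integrable lborel (\<lambda>x. w x * x ^ k * exp (u * x))"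
proof -
  have "\<bar>x ^ k * exp (u * x)\<bar> \<le> 1 * exp \<bar>u\<bar>" if "x \<in> {-1..1}" for x
    using that exp_mult_le_exp_abs[of x u] unfolding abs_mult
    by (intro mult_mono) (auto simp: power_abs power_le_one)
  then show ?thesis
    using integrable_weighted[of "\<lambda>x. x ^ k * exp (u * x)" "exp \<bar>u\<bar>"] by (simp add: mult.assoc)
qed

lemma exp_moment_difference_quotient_bound:
  assumes "y \<noteq> u" and "\<bar>y - u\<bar> \<le> 1"
  shows "\<bar>(exp_moment w k y - exp_moment w k u) / (y - u) - exp_moment w (Suc k) u\<bar>
    \<le> 2 * exp \<bar>u\<bar> * (\<integral>x. w x \<partial>lborel) * \<bar>y - u\<bar>"
proof -
  define h where "h = y - u"
  have h: "h \<noteq> 0" "\<bar>h\<bar> \<le> 1"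
    using assms by (auto simp: h_def)
  define r where "r x = x ^ k * exp (u * x) * ((exp (h * x) - 1 - h * x) / h)" for x
  have r_measurable [measurable]: "r \<in> borel_measurable borel"
    unfolding r_def by measurable
  have r_bound: "\<bar>r x\<bar> \<le> 2 * exp \<bar>u\<bar> * \<bar>h\<bar>" if "x \<in> {-1..1}" for x
    unfolding r_def using h that by (intro abs_difference_quotient_remainder_le) auto
  have "exp_moment w k y = (\<integral>x. w x * x ^ k * exp (u * x)
      + h * (w x * x ^ Suc k * exp (u * x)) + h * (w x * r x) \<partial>lborel)"
    unfolding exp_moment_def
  proof (intro Bochner_Integration.integral_cong refl)
    fix x
    have "exp (y * x) = exp (u * x) * exp (h * x)"
      by (simp add: h_def flip: exp_add) (simp add: algebra_simps)
    then show "w x * x ^ k * exp (y * x)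
        = w x * x ^ k * exp (u * x) + h * (w x * x ^ Suc k * exp (u * x)) + h * (w x * r x)"
      using h(1) by (simp add: r_def field_simps)
  qed
  also have "\<dots> = exp_moment w k u + h * exp_moment w (Suc k) u + h * (\<integral>x. w x * r x \<partial>lborel)"
    using integrable_exp_moment[of k u] integrable_exp_moment[of "Suc k" u]
      integrable_weighted[OF r_measurable r_bound]
    unfolding exp_moment_def by (simp del: power_Suc)
  finally have "(exp_moment w k y - exp_moment w k u) / (y - u) - exp_moment w (Suc k) u
      = (\<integral>x. w x * r x \<partial>lborel)"
    using h(1) by (simp add: h_def field_simps)
  also have "\<bar>\<dots>\<bar> \<le> 2 * exp \<bar>u\<bar> * \<bar>h\<bar> * (\<integral>x. w x \<partial>lborel)"
    using r_bound by (intro abs_integral_weighted_le) simp_all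
  finally show ?thesis
    by (simp add: h_def mult_ac)
qed

lemma has_real_derivative_exp_moment:
  "(exp_moment w k has_real_derivative exp_moment w (Suc k) u) (at u)"
proof -
  define C where "C = 2 * exp \<bar>u\<bar> * (\<integral>x. w x \<partial>lborel)"
  have "\<forall>\<^sub>F y in at u. norm ((exp_moment w k y - exp_moment w k u) / (y - u) - exp_moment w (Suc k) u)
      \<le> C * \<bar>y - u\<bar>"
    unfolding eventually_at C_def using exp_moment_difference_quotient_bound
    by (intro exI[of _ 1]) (auto simp: dist_real_def)
  moreover have "((\<lambda>y. C * \<bar>y - u\<bar>) \<longlongrightarrow> 0) (at u)"
    by (intro tendsto_eq_intros) auto
  ultimately have "((\<lambda>y. (exp_moment w k y - exp_moment w k u) / (y - u) - exp_moment w (Suc k) u)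
      \<longlongrightarrow> 0) (at u)"
    by (rule Lim_null_comparison)
  then show ?thesis
    unfolding has_field_derivative_iff by (simp add: LIM_zero_iff)
qed

lemma integrable_weighted_continuous:
  assumes "continuous_on UNIV g"
  shows "integrable lborel (\<lambda>x. w x * g x)"
proof -
  have "compact (g ` {-1..1})"
    using assms by (intro compact_continuous_image) (auto intro: continuous_on_subset)
  then obtain B where "\<And>y. y \<in> g ` {-1..1} \<Longrightarrow> norm y \<le> B"
    using compact_imp_bounded bounded_iff by metis
  then show ?thesis
    using assms by (intro integrable_weighted[of g B]) (auto intro: borel_measurable_continuous_onI)
qed

lemma integral_cubic_exp_moment:
  "(\<integral>x. w x * (c3 * x ^ 3 + c2 * x ^ 2 + c1 * x + c0) * exp (u * x) \<partial>lborel)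
    = c3 * exp_moment w 3 u + c2 * exp_moment w 2 u + c1 * exp_moment w 1 u + c0 * exp_moment w 0 u"
proof -
  have "(\<integral>x. w x * (c3 * x ^ 3 + c2 * x ^ 2 + c1 * x + c0) * exp (u * x) \<partial>lborel)
     = (\<integral>x. c3 * (w x * x ^ 3 * exp (u * x)) + c2 * (w x * x ^ 2 * exp (u * x))
           + c1 * (w x * x ^ 1 * exp (u * x)) + c0 * (w x * x ^ 0 * exp (u * x)) \<partial>lborel)"
    by (rule Bochner_Integration.integral_cong) (auto simp: algebra_simps)
  also have "\<dots> = c3 * exp_moment w 3 u + c2 * exp_moment w 2 u + c1 * exp_moment w 1 u
      + c0 * exp_moment w 0 u"
    using integrable_exp_moment[of 3 u] integrable_exp_moment[of 2 u]
      integrable_exp_moment[of 1 u] integrable_exp_moment[of 0 u]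
    unfolding exp_moment_def by (simp del: power_Suc power_0 power_one_right)
  finally show ?thesis .
qed

end

section \<open>The tilted third cumulant of a symmetric increasing weight\<close>

lemma integral_pos_of_pos_on_interval:
  fixes f :: "real \<Rightarrow> real"
  assumes "integrable lborel f" and "\<And>x. 0 \<le> f x"
    and "a < b" and "\<And>x. a < x \<Longrightarrow> x < b \<Longrightarrow> 0 < f x"
  shows "0 < (\<integral>x. f x \<partial>lborel)"
proof -
  have "(\<integral>x. f x \<partial>lborel) \<noteq> 0"
  proof
    assume "(\<integral>x. f x \<partial>lborel) = 0"
    then have "AE x in lborel. f x = 0"
      using integral_nonneg_eq_0_iff_AE[OF assms(1)] assms(2) by simp
    then have "AE x in lborel. x \<notin> {a<..<b}"
      by eventually_elim (use assms(4) in force)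
    then have "{a<..<b} \<in> null_sets lborel"
      by (subst AE_iff_null_sets) auto
    then have "emeasure lborel {a<..<b} = 0"
      by auto
    then show False
      using assms(3) by simp
  qed
  moreover have "0 \<le> (\<integral>x. f x \<partial>lborel)"
    using assms(2) by (simp add: Bochner_Integration.integral_nonneg)
  ultimately show ?thesis
    by simp
qed

lemma lborel_fold:
  fixes F :: "real \<Rightarrow> real"
  assumes "integrable lborel F"
  shows integrable_lborel_fold: "integrable lborel (\<lambda>x. (F x + F (2 * c - x)) * indicator {c<..} x)"
    and integral_lborel_fold:
      "(\<integral>x. F x \<partial>lborel) = (\<integral>x. (F x + F (2 * c - x)) * indicator {c<..} x \<partial>lborel)"
proof -
  have [measurable]: "F \<in> borel_measurable borel"
    using assms by (simp add: borel_measurable_integrable)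
  have integrable_restr: "integrable lborel (\<lambda>x. F x * indicator S x)" if "S \<in> sets borel" for S
    using that assms by (intro integrable_real_mult_indicator) auto
  have reflect: "(\<lambda>x. F (2 * c + -1 * x) * indicator {..<c} (2 * c + -1 * x))
      = (\<lambda>x. F (2 * c - x) * indicator {c<..} x)"
    by (auto simp: indicator_def)
  have integrable_reflected: "integrable lborel (\<lambda>x. F (2 * c - x) * indicator {c<..} x)"
    using lborel_integrable_real_affine_iff[of "-1" "\<lambda>x. F x * indicator {..<c} x" "2 * c"]
      integrable_restr[of "{..<c}"] unfolding reflect by simp
  then show "integrable lborel (\<lambda>x. (F x + F (2 * c - x)) * indicator {c<..} x)"
    using integrable_restr[of "{c<..}"] by (simp add: distrib_right)
  have "(\<integral>x. F x \<partial>lborel) = (\<integral>x. F x * indicator {c<..} x + F x * indicator {..<c} x \<partial>lborel)"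
  proof (rule integral_cong_AE)
    show "AE x in lborel. F x = F x * indicator {c<..} x + F x * indicator {..<c} x"
      using AE_lborel_singleton[of c] by eventually_elim (auto split: split_indicator)
  qed measurable
  also have "\<dots> = (\<integral>x. F x * indicator {c<..} x \<partial>lborel) + (\<integral>x. F x * indicator {..<c} x \<partial>lborel)"
    using integrable_restr by simp
  also have "(\<integral>x. F x * indicator {..<c} x \<partial>lborel) = (\<integral>x. F (2 * c - x) * indicator {c<..} x \<partial>lborel)"
    using lborel_integral_real_affine[of "-1" "\<lambda>x. F x * indicator {..<c} x" "2 * c"]
    unfolding reflect by simp
  also have "(\<integral>x. F x * indicator {c<..} x \<partial>lborel) + \<dots>
      = (\<integral>x. (F x + F (2 * c - x)) * indicator {c<..} x \<partial>lborel)"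
    using integrable_restr[of "{c<..}"] integrable_reflected by (simp add: distrib_right)
  finally show "(\<integral>x. F x \<partial>lborel) = (\<integral>x. (F x + F (2 * c - x)) * indicator {c<..} x \<partial>lborel)" .
qed

locale symmetric_increasing_weight = unit_interval_weight +
  assumes weight_symmetric: "\<And>x. w (- x) = w x"
    and weight_strict_mono: "\<And>x y. 0 \<le> x \<Longrightarrow> x < y \<Longrightarrow> y \<le> 1 \<Longrightarrow> w x < w y"
begin

lemma weight_abs: "w \<bar>x\<bar> = w x"
  by (cases "0 \<le> x") (auto simp: weight_symmetric)

lemma weight_mono_abs: "\<bar>y\<bar> \<le> \<bar>x\<bar> \<Longrightarrow> \<bar>x\<bar> \<le> 1 \<Longrightarrow> w y \<le> w x"
  using weight_strict_mono[of "\<bar>y\<bar>" "\<bar>x\<bar>"] weight_abs[of x] weight_abs[of y]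
  by (cases "\<bar>y\<bar> = \<bar>x\<bar>") auto

lemma weight_pos: "0 < \<bar>x\<bar> \<Longrightarrow> \<bar>x\<bar> \<le> 1 \<Longrightarrow> 0 < w x"
  using weight_strict_mono[of 0 "\<bar>x\<bar>"] weight_nonneg[of 0] weight_abs[of x] by auto

lemma exp_moment_0_pos: "0 < exp_moment w 0 u"
  unfolding exp_moment_def using integrable_exp_moment[of 0 u] weight_nonneg weight_pos
  by (intro integral_pos_of_pos_on_interval[of _ 0 1]) auto

lemma exp_moment_1_nonneg:
  assumes "0 \<le> u"
  shows "0 \<le> exp_moment w 1 u"
proof -
  have "exp_moment w 1 u = (\<integral>x. w x * (x * (exp (u * x) - exp (- u * x))) * indicator {0<..} x \<partial>lborel)"
    unfolding exp_moment_def using integrable_exp_moment[of 1 u]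
    by (subst integral_lborel_fold[where c = 0]) (simp_all add: weight_symmetric algebra_simps)
  also have "\<dots> \<ge> 0"
    using assms weight_nonneg by (intro Bochner_Integration.integral_nonneg) (auto simp: indicator_def)
  finally show ?thesis .
qed

lemma exp_moment_1_less_0: "exp_moment w 1 u < exp_moment w 0 u"
proof -
  have "0 < (\<integral>x. w x * x ^ 0 * exp (u * x) - w x * x ^ 1 * exp (u * x) \<partial>lborel)"
  proof (rule integral_pos_of_pos_on_interval[of _ 0 1])
    show "0 \<le> w x * x ^ 0 * exp (u * x) - w x * x ^ 1 * exp (u * x)" for x
    proof -
      have "0 \<le> w x * exp (u * x) * (1 - x)"
        using weight_nonneg[of x] weight_outside[of x] by (cases "x \<le> 1") auto
      then show ?thesis
        by (simp add: algebra_simps)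
    qed
    show "0 < w x * x ^ 0 * exp (u * x) - w x * x ^ 1 * exp (u * x)" if "0 < x" "x < 1" for x
      using that weight_pos[of x] by (simp add: algebra_simps)
    show "integrable lborel (\<lambda>x. w x * x ^ 0 * exp (u * x) - w x * x ^ 1 * exp (u * x))"
      using integrable_exp_moment[of 0 u] integrable_exp_moment[of 1 u]
      by (rule Bochner_Integration.integrable_diff)
  qed simp
  then show ?thesis
    using integrable_exp_moment[of 0 u] integrable_exp_moment[of 1 u] by (simp add: exp_moment_def)
qed

lemma tilted_weight_reflection_less:
  assumes "0 < u" and "0 \<le> \<mu>" and "\<mu> < x" and "x \<le> 1"
  shows "w (2 * \<mu> - x) * exp (u * (2 * \<mu> - x)) < w x * exp (u * x)"
proof -
  have "w (2 * \<mu> - x) \<le> w x"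
    using assms by (intro weight_mono_abs) auto
  then have "w (2 * \<mu> - x) * exp (u * (2 * \<mu> - x)) \<le> w x * exp (u * (2 * \<mu> - x))"
    by (rule mult_right_mono) simp
  also have "\<dots> < w x * exp (u * x)"
    using assms weight_pos[of x] by (intro mult_strict_left_mono) auto
  finally show ?thesis .
qed

text \<open>The cubic below is odd about \<open>\<mu>\<close>, so folding the integral at \<open>\<mu>\<close> compares the tilted
  weight with its mirror image, which is smaller on \<open>(\<mu>, 1)\<close>, where the cubic is negative; beyond \<open>1\<close>
  the weight vanishes and the cubic is nonnegative.\<close>

lemma integral_tilted_cubic_neg:
  assumes u: "0 < u" and \<mu>: "0 \<le> \<mu>" "\<mu> < 1"
  shows "(\<integral>x. w x * exp (u * x) * ((x - \<mu>) * (x - 1) * (x + 1 - 2 * \<mu>)) \<partial>lborel) < 0"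
proof -
  define q where "q x = w x * exp (u * x)" for x
  define p where "p x = (x - \<mu>) * (x - 1) * (x + 1 - 2 * \<mu>)" for x
  have folded: "q x * p x + q (2 * \<mu> - x) * p (2 * \<mu> - x) = p x * (q x - q (2 * \<mu> - x))" for x
    by (simp add: p_def algebra_simps)
  have "integrable lborel (\<lambda>x. q x * p x)"
    using integrable_weighted_continuous[of "\<lambda>x. exp (u * x) * p x"]
    by (simp add: q_def p_def mult_ac continuous_intros)
  note fold = integrable_lborel_fold[OF this, of \<mu>] integral_lborel_fold[OF this, of \<mu>]
  have folded_neg: "p x * (q x - q (2 * \<mu> - x)) * indicator {\<mu><..} x < 0" if "\<mu> < x" "x < 1" for x
  proof -
    have "p x < 0" and "q (2 * \<mu> - x) < q x"
      using that \<mu> u tilted_weight_reflection_less[of u \<mu> x]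
      by (auto simp: p_def q_def mult_pos_neg mult_neg_pos)
    then show ?thesis
      using that by (simp add: mult_neg_pos)
  qed
  have folded_nonpos: "p x * (q x - q (2 * \<mu> - x)) * indicator {\<mu><..} x \<le> 0" for x
  proof (cases "\<mu> < x")
    case True
    consider "x < 1" | "x = 1" | "1 < x"
      by linarith
    then show ?thesis
    proof cases
      case 1
      then show ?thesis
        using folded_neg[OF True] by (simp add: less_imp_le)
    next
      case 3
      then have "0 \<le> p x" and "q x = 0" and "0 \<le> q (2 * \<mu> - x)"
        using True \<mu> weight_outside[of x] weight_nonneg by (auto simp: p_def q_def)
      then show ?thesis
        by (simp add: mult_nonneg_nonpos)
    qed (simp add: p_def)
  qed simp
  have "0 < (\<integral>x. - (p x * (q x - q (2 * \<mu> - x)) * indicator {\<mu><..} x) \<partial>lborel)"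
    using fold(1) folded_nonpos folded_neg
    by (intro integral_pos_of_pos_on_interval[OF _ _ \<mu>(2)]) (auto simp: folded)
  then have "(\<integral>x. q x * p x \<partial>lborel) < 0"
    using fold(2) by (simp add: folded)
  then show ?thesis
    by (simp add: p_def q_def)
qed

text \<open>For \<open>\<mu>\<close> the tilted mean, the cubic differs from \<open>(x - \<mu>)\<^sup>3\<close> by a multiple of \<open>x - \<mu>\<close>,
  whose tilted integral vanishes.\<close>

lemma third_central_exp_moment_eq:
  assumes "exp_moment w 1 u = \<mu> * exp_moment w 0 u"
  shows "exp_moment w 3 u * (exp_moment w 0 u)\<^sup>2
      - 3 * exp_moment w 2 u * exp_moment w 1 u * exp_moment w 0 u + 2 * (exp_moment w 1 u) ^ 3
    = (exp_moment w 0 u)\<^sup>2 * (\<integral>x. w x * exp (u * x) * ((x - \<mu>) * (x - 1) * (x + 1 - 2 * \<mu>)) \<partial>lborel)"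
proof -
  have "(\<integral>x. w x * exp (u * x) * ((x - \<mu>) * (x - 1) * (x + 1 - 2 * \<mu>)) \<partial>lborel)
      = (\<integral>x. w x * (1 * x ^ 3 + (- 3 * \<mu>) * x ^ 2 + (3 * \<mu>\<^sup>2 - (1 - \<mu>)\<^sup>2) * x
          + ((1 - \<mu>)\<^sup>2 * \<mu> - \<mu> ^ 3)) * exp (u * x) \<partial>lborel)"
    by (rule Bochner_Integration.integral_cong) (auto simp: algebra_simps power2_eq_square power3_eq_cube)
  also have "\<dots> = exp_moment w 3 u - 3 * \<mu> * exp_moment w 2 u
      + (3 * \<mu>\<^sup>2 - (1 - \<mu>)\<^sup>2) * exp_moment w 1 u + ((1 - \<mu>)\<^sup>2 * \<mu> - \<mu> ^ 3) * exp_moment w 0 u"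
    unfolding integral_cubic_exp_moment by simp
  finally show ?thesis
    unfolding assms by algebra
qed

lemma third_central_exp_moment_neg:
  assumes "0 < u"
  shows "exp_moment w 3 u * (exp_moment w 0 u)\<^sup>2
    - 3 * exp_moment w 2 u * exp_moment w 1 u * exp_moment w 0 u + 2 * (exp_moment w 1 u) ^ 3 < 0"
proof -
  define \<mu> where "\<mu> = exp_moment w 1 u / exp_moment w 0 u"
  have "exp_moment w 1 u = \<mu> * exp_moment w 0 u" and "0 \<le> \<mu>" and "\<mu> < 1"
    using exp_moment_0_pos[of u] exp_moment_1_nonneg[of u] exp_moment_1_less_0[of u] assms
    by (simp_all add: \<mu>_def)
  then show ?thesis
    using third_central_exp_moment_eq integral_tilted_cubic_neg[OF assms] exp_moment_0_pos[of u]
    by (simp add: mult_pos_neg)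
qed

definition cgf :: "real \<Rightarrow> real" where
  "cgf u = ln (exp_moment w 0 u)"

definition tilted_mean :: "real \<Rightarrow> real" where
  "tilted_mean u = exp_moment w 1 u / exp_moment w 0 u"

definition tilted_variance :: "real \<Rightarrow> real" where
  "tilted_variance u = (exp_moment w 2 u * exp_moment w 0 u - (exp_moment w 1 u)\<^sup>2) / (exp_moment w 0 u)\<^sup>2"

definition tilted_third_cumulant :: "real \<Rightarrow> real" where
  "tilted_third_cumulant u = (exp_moment w 3 u * (exp_moment w 0 u)\<^sup>2
    - 3 * exp_moment w 2 u * exp_moment w 1 u * exp_moment w 0 u + 2 * (exp_moment w 1 u) ^ 3)
    / (exp_moment w 0 u) ^ 3"

lemma has_real_derivative_exp_moment_0_1_2:
  "(exp_moment w 0 has_real_derivative exp_moment w 1 u) (at u)"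
  "(exp_moment w (Suc 0) has_real_derivative exp_moment w 2 u) (at u)"
  "(exp_moment w 2 has_real_derivative exp_moment w 3 u) (at u)"
  using has_real_derivative_exp_moment[of 0 u] has_real_derivative_exp_moment[of 1 u]
    has_real_derivative_exp_moment[of 2 u]
  by (simp_all add: numeral_2_eq_2 numeral_3_eq_3)

lemma has_real_derivative_cgf: "(cgf has_real_derivative tilted_mean u) (at u)"
  unfolding cgf_def[abs_def] tilted_mean_def using exp_moment_0_pos[of u]
  by (auto intro!: derivative_eq_intros has_real_derivative_exp_moment_0_1_2 simp: field_simps)

lemma has_real_derivative_tilted_mean: "(tilted_mean has_real_derivative tilted_variance u) (at u)"
  unfolding tilted_mean_def[abs_def] tilted_variance_def using exp_moment_0_pos[of u]
  by (auto intro!: derivative_eq_intros has_real_derivative_exp_moment_0_1_2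
      simp: field_simps power2_eq_square)

lemma has_real_derivative_tilted_variance:
  "(tilted_variance has_real_derivative tilted_third_cumulant u) (at u)"
  unfolding tilted_variance_def[abs_def] tilted_third_cumulant_def using exp_moment_0_pos[of u]
  by (auto intro!: derivative_eq_intros has_real_derivative_exp_moment_0_1_2
      simp: field_simps power2_eq_square power3_eq_cube)

lemma tilted_third_cumulant_neg: "0 < u \<Longrightarrow> tilted_third_cumulant u < 0"
  unfolding tilted_third_cumulant_def using third_central_exp_moment_neg[of u] exp_moment_0_pos[of u]
  by (simp add: divide_neg_pos)

lemma cgf_sum3_le:
  assumes "0 < T" and "0 \<le> u1" "0 \<le> u2" "0 \<le> u3"
    and "u1 + u2 + u3 = 2 * T" and "u1\<^sup>2 + u2\<^sup>2 + u3\<^sup>2 = 2 * T\<^sup>2"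
  shows "cgf u1 + cgf u2 + cgf u3 \<le> cgf 0 + 2 * cgf T"
    and "0 < u1 \<Longrightarrow> 0 < u2 \<Longrightarrow> 0 < u3 \<Longrightarrow> cgf u1 + cgf u2 + cgf u3 < cgf 0 + 2 * cgf T"
  using sum3_le_of_third_deriv_neg[of cgf tilted_mean tilted_variance tilted_third_cumulant,
      OF has_real_derivative_cgf has_real_derivative_tilted_mean has_real_derivative_tilted_variance
      tilted_third_cumulant_neg assms]
  by simp_all

end

section \<open>Three independent copies\<close>

locale symmetric_increasing_iid3 =
  fixes M :: "'a measure" and X :: "nat \<Rightarrow> 'a \<Rightarrow> real" and f :: "real \<Rightarrow> real"
  assumes prob_space_M: "prob_space M"
    and indep: "prob_space.indep_vars M (\<lambda>_. borel) X {0, 1, 2}"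
    and distributed: "\<And>i. i \<in> {0, 1, 2} \<Longrightarrow> distributed M lborel (X i) (\<lambda>x. ennreal (f x))"
    and range: "\<And>i \<omega>. i \<in> {0, 1, 2} \<Longrightarrow> \<omega> \<in> space M \<Longrightarrow> X i \<omega> \<in> {-1..1}"
    and f_nonneg: "\<And>x. x \<in> {-1..1} \<Longrightarrow> f x \<ge> 0"
    and f_symmetric: "\<And>x. x \<in> {-1..1} \<Longrightarrow> f x = f (- x)"
    and f_strict_mono: "strict_mono_on {0..1} f"
begin

sublocale prob_space M
  by (rule prob_space_M)

lemma measurable_X [measurable]: "i \<in> {0, 1, 2} \<Longrightarrow> X i \<in> borel_measurable M"
  using distributed_measurable[OF distributed] by simp

text \<open>The hypotheses say nothing about \<open>f\<close> outside \<open>[-1, 1]\<close>; \<open>dens\<close> is the version of the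
  density that vanishes there.\<close>

definition dens :: "real \<Rightarrow> real" where
  "dens x = (if x \<in> {-1..1} then f x else 0)"

lemma dens_nonneg: "0 \<le> dens x"
  by (simp add: dens_def f_nonneg)

lemma measurable_ennreal_f [measurable]: "(\<lambda>x. ennreal (f x)) \<in> borel_measurable borel"
  using distributed_borel_measurable[OF distributed[of 0]] by simp

lemma measurable_dens [measurable]: "dens \<in> borel_measurable borel"
proof -
  have "dens = (\<lambda>x. if x \<in> {-1..1} then enn2real (ennreal (f x)) else 0)"
    by (auto simp: dens_def fun_eq_iff f_nonneg)
  also have "\<dots> \<in> borel_measurable borel"
    by measurable
  finally show ?thesis .
qed

lemma distributed_dens: "i \<in> {0, 1, 2} \<Longrightarrow> distributed M lborel (X i) (\<lambda>x. ennreal (dens x))"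
proof -
  have "(\<integral>\<^sup>+x. ennreal (f x) * indicator (- {-1..1}) x \<partial>lborel) = emeasure M (X 0 -` (- {-1..1}) \<inter> space M)"
    by (rule distributed_emeasure[OF distributed, symmetric]) auto
  also have "X 0 -` (- {-1..1}) \<inter> space M = {}"
    using range[of 0] by auto
  finally have "(\<integral>\<^sup>+x. ennreal (f x) * indicator (- {-1..1}) x \<partial>lborel) = 0"
    by simp
  then have "AE x in lborel. ennreal (f x) * indicator (- {-1..1}) x = 0"
    by (subst (asm) nn_integral_0_iff_AE) auto
  then have "density lborel (\<lambda>x. ennreal (f x)) = density lborel (\<lambda>x. ennreal (dens x))"
    by (intro density_cong; (measurable)?) (auto elim!: eventually_mono simp: dens_def split: split_indicator)
  then show "i \<in> {0, 1, 2} \<Longrightarrow> distributed M lborel (X i) (\<lambda>x. ennreal (dens x))"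
    using distributed[of i] by (simp add: distributed_def)
qed

lemma integral_comp_X:
  assumes "i \<in> {0, 1, 2}" and "g \<in> borel_measurable borel"
  shows "(\<integral>\<omega>. g (X i \<omega>) \<partial>M) = (\<integral>x. dens x * g x \<partial>lborel)"
  using distributed_integral[OF distributed_dens[OF assms(1)], of g] assms(2) dens_nonneg by simp

sublocale X: symmetric_increasing_weight dens
proof
  show "integrable lborel dens"
    using distributed_integrable[OF distributed_dens[of 0], of "\<lambda>_. 1"] dens_nonneg by simp
  show "0 \<le> dens x" for x
    by (rule dens_nonneg)
  show "x \<notin> {-1..1} \<Longrightarrow> dens x = 0" for x
    unfolding dens_def by auto
  show "dens (- x) = dens x" for x
    using f_symmetric[of x] by (auto simp: dens_def)
  show "0 \<le> x \<Longrightarrow> x < y \<Longrightarrow> y \<le> 1 \<Longrightarrow> dens x < dens y" for x y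
    using f_strict_mono by (auto simp: dens_def strict_mono_on_def)
qed

lemma AE_X_neq_1: "i \<in> {0, 1, 2} \<Longrightarrow> AE \<omega> in M. X i \<omega> \<noteq> 1"
proof -
  assume i: "i \<in> {0, 1, 2}"
  have "emeasure M (X i -` {1} \<inter> space M) = (\<integral>\<^sup>+x. ennreal (dens x) * indicator {1} x \<partial>lborel)"
    by (rule distributed_emeasure[OF distributed_dens[OF i]]) simp
  also have "\<dots> = 0"
    using AE_lborel_singleton[of 1] by (subst nn_integral_0_iff_AE) (auto elim!: eventually_mono)
  finally show ?thesis
    using i by (subst AE_iff_measurable[of "X i -` {1} \<inter> space M"]) auto
qed

definition Z :: "real \<Rightarrow> real \<Rightarrow> real \<Rightarrow> 'a \<Rightarrow> real" where
  "Z a b c \<omega> = a\<^sup>2 * (1 - X 0 \<omega>) + b\<^sup>2 * (1 - X 1 \<omega>) + c\<^sup>2 * (1 - X 2 \<omega>)"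

lemma measurable_Z [measurable]: "Z a b c \<in> borel_measurable M"
  unfolding Z_def by measurable

lemma Z_bounds:
  assumes "\<omega> \<in> space M"
  shows "0 \<le> Z a b c \<omega>" and "Z a b c \<omega> \<le> 2 * (a\<^sup>2 + b\<^sup>2 + c\<^sup>2)"
proof -
  have X: "-1 \<le> X i \<omega>" "X i \<omega> \<le> 1" if "i \<in> {0, 1, 2}" for i
    using range[OF that assms] by auto
  show "0 \<le> Z a b c \<omega>"
    unfolding Z_def using X[of 0] X[of 1] X[of 2] by (intro add_nonneg_nonneg mult_nonneg_nonneg) auto
  have "a\<^sup>2 * (1 - X 0 \<omega>) \<le> a\<^sup>2 * 2" "b\<^sup>2 * (1 - X 1 \<omega>) \<le> b\<^sup>2 * 2" "c\<^sup>2 * (1 - X 2 \<omega>) \<le> c\<^sup>2 * 2"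
    using X[of 0] X[of 1] X[of 2] by (intro mult_left_mono; simp)+
  then show "Z a b c \<omega> \<le> 2 * (a\<^sup>2 + b\<^sup>2 + c\<^sup>2)"
    unfolding Z_def by (simp add: distrib_left mult.commute[of 2] add_mono)
qed

lemma AE_Z_pos:
  assumes "a\<^sup>2 + b\<^sup>2 + c\<^sup>2 > 0"
  shows "AE \<omega> in M. 0 < Z a b c \<omega>"
proof -
  have "AE \<omega> in M. \<forall>i\<in>{0, 1, 2}. X i \<omega> \<noteq> 1"
    using AE_X_neq_1 by (intro AE_ball_countable') auto
  then show ?thesis
    using AE_space
  proof eventually_elim
    case (elim \<omega>)
    then have pos: "0 < 1 - X 0 \<omega>" "0 < 1 - X 1 \<omega>" "0 < 1 - X 2 \<omega>"
      using range[of 0 \<omega>] range[of 1 \<omega>] range[of 2 \<omega>] by fastforce+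
    then have "0 \<le> a\<^sup>2 * (1 - X 0 \<omega>)" "0 \<le> b\<^sup>2 * (1 - X 1 \<omega>)" "0 \<le> c\<^sup>2 * (1 - X 2 \<omega>)"
      by simp_all
    moreover have "a \<noteq> 0 \<or> b \<noteq> 0 \<or> c \<noteq> 0"
      using assms by auto
    then have "0 < a\<^sup>2 * (1 - X 0 \<omega>) \<or> 0 < b\<^sup>2 * (1 - X 1 \<omega>) \<or> 0 < c\<^sup>2 * (1 - X 2 \<omega>)"
      using pos by auto
    ultimately show ?case
      unfolding Z_def by linarith
  qed
qed

lemma integrable_exp_neg_Z: "0 \<le> t \<Longrightarrow> integrable M (\<lambda>\<omega>. exp (- t * Z a b c \<omega>))"
  using Z_bounds(1) by (intro integrable_const_bound[where B = 1]) (auto simp: mult_nonneg_nonneg)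

lemma expectation_exp_neg_Z:
  assumes "0 \<le> t"
  shows "(\<integral>\<omega>. exp (- t * Z a b c \<omega>) \<partial>M)
    = exp (X.cgf (t * a\<^sup>2) + X.cgf (t * b\<^sup>2) + X.cgf (t * c\<^sup>2) - t * (a\<^sup>2 + b\<^sup>2 + c\<^sup>2))"
proof -
  define s where "s i = t * (if i = (0::nat) then a\<^sup>2 else if i = 1 then b\<^sup>2 else c\<^sup>2)" for i
  define Y where "Y i \<omega> = exp (- s i * (1 - X i \<omega>))" for i \<omega>
  have s_nonneg: "0 \<le> s i" for i
    using assms by (simp add: s_def)
  have "indep_vars (\<lambda>_. borel) Y {0, 1, 2}"
    unfolding Y_def by (rule indep_vars_compose2[OF indep]) measurable
  moreover have "integrable M (Y i)" if "i \<in> {0, 1, 2}" for i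
    unfolding Y_def using that range s_nonneg
    by (intro integrable_const_bound[where B = 1]) (auto simp: mult_nonneg_nonneg)
  ultimately have "(\<integral>\<omega>. (\<Prod>i\<in>{0, 1, 2}. Y i \<omega>) \<partial>M) = (\<Prod>i\<in>{0, 1, 2}. \<integral>\<omega>. Y i \<omega> \<partial>M)"
    by (intro indep_vars_lebesgue_integral) auto
  moreover have "exp (- t * Z a b c \<omega>) = (\<Prod>i\<in>{0, 1, 2}. Y i \<omega>)" for \<omega>
  proof -
    have "- t * Z a b c \<omega> = - s 0 * (1 - X 0 \<omega>) + (- s 1 * (1 - X 1 \<omega>) + - s 2 * (1 - X 2 \<omega>))"
      by (simp add: s_def Z_def algebra_simps)
    then show ?thesis
      by (simp add: Y_def flip: exp_add)
  qed
  ultimately have "(\<integral>\<omega>. exp (- t * Z a b c \<omega>) \<partial>M) = (\<Prod>i\<in>{0, 1, 2}. \<integral>\<omega>. Y i \<omega> \<partial>M)"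
    by simp
  also have "\<dots> = (\<Prod>i\<in>{0, 1, 2}. exp (X.cgf (s i) - s i))"
  proof (rule prod.cong[OF refl])
    fix i :: nat
    assume "i \<in> {0, 1, 2}"
    then have "(\<integral>\<omega>. Y i \<omega> \<partial>M) = (\<integral>x. exp (- s i) * (dens x * x ^ 0 * exp (s i * x)) \<partial>lborel)"
      unfolding Y_def by (subst integral_comp_X) (auto simp: algebra_simps simp flip: exp_add)
    also have "\<dots> = exp (X.cgf (s i) - s i)"
      using X.exp_moment_0_pos[of "s i"] by (simp add: exp_moment_def X.cgf_def exp_diff exp_minus field_simps)
    finally show "(\<integral>\<omega>. Y i \<omega> \<partial>M) = exp (X.cgf (s i) - s i)" .
  qed
  also have "\<dots> = exp (\<Sum>i\<in>{0, 1, 2}. X.cgf (s i) - s i)"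
    by (rule exp_sum[symmetric]) simp
  also have "(\<Sum>i\<in>{0, 1, 2}. X.cgf (s i) - s i)
      = X.cgf (t * a\<^sup>2) + X.cgf (t * b\<^sup>2) + X.cgf (t * c\<^sup>2) - t * (a\<^sup>2 + b\<^sup>2 + c\<^sup>2)"
    by (simp add: s_def algebra_simps)
  finally show ?thesis .
qed

lemma sum_squares_of_squares:
  fixes a b c \<kappa> :: real
  assumes "a + b + c = 0" and "a\<^sup>2 + b\<^sup>2 + c\<^sup>2 = 2 * \<kappa>\<^sup>2"
  shows "(a\<^sup>2)\<^sup>2 + (b\<^sup>2)\<^sup>2 + (c\<^sup>2)\<^sup>2 = 2 * (\<kappa>\<^sup>2)\<^sup>2"
proof -
  have c: "c = - a - b"
    using assms(1) by simp
  have "\<kappa>\<^sup>2 = a\<^sup>2 + a * b + b\<^sup>2"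
    using assms(2) unfolding c by (simp add: algebra_simps power2_eq_square)
  then show ?thesis
    unfolding c by (simp add: algebra_simps power2_eq_square)
qed

lemma expectation_exp_neg_Z_le:
  assumes \<kappa>: "\<kappa> \<noteq> 0" and sum: "a + b + c = 0" and sum_sq: "a\<^sup>2 + b\<^sup>2 + c\<^sup>2 = 2 * \<kappa>\<^sup>2"
    and t: "0 < t"
  shows "(\<integral>\<omega>. exp (- t * Z a b c \<omega>) \<partial>M) \<le> (\<integral>\<omega>. exp (- t * Z 0 \<kappa> (- \<kappa>) \<omega>) \<partial>M)"
    and "a \<noteq> 0 \<Longrightarrow> b \<noteq> 0 \<Longrightarrow> c \<noteq> 0
      \<Longrightarrow> (\<integral>\<omega>. exp (- t * Z a b c \<omega>) \<partial>M) < (\<integral>\<omega>. exp (- t * Z 0 \<kappa> (- \<kappa>) \<omega>) \<partial>M)"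
proof -
  define T where "T = t * \<kappa>\<^sup>2"
  have T: "0 < T"
    using \<kappa> t by (simp add: T_def)
  have nonneg: "0 \<le> t * a\<^sup>2" "0 \<le> t * b\<^sup>2" "0 \<le> t * c\<^sup>2"
    using t by simp_all
  have "t * a\<^sup>2 + t * b\<^sup>2 + t * c\<^sup>2 = t * (a\<^sup>2 + b\<^sup>2 + c\<^sup>2)"
    "(t * a\<^sup>2)\<^sup>2 + (t * b\<^sup>2)\<^sup>2 + (t * c\<^sup>2)\<^sup>2 = t\<^sup>2 * ((a\<^sup>2)\<^sup>2 + (b\<^sup>2)\<^sup>2 + (c\<^sup>2)\<^sup>2)"
    by (simp_all add: algebra_simps power_mult_distrib)
  then have moments: "t * a\<^sup>2 + t * b\<^sup>2 + t * c\<^sup>2 = 2 * T"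
    "(t * a\<^sup>2)\<^sup>2 + (t * b\<^sup>2)\<^sup>2 + (t * c\<^sup>2)\<^sup>2 = 2 * T\<^sup>2"
    unfolding sum_sq sum_squares_of_squares[OF sum sum_sq] by (simp_all add: T_def power_mult_distrib)
  have lhs: "(\<integral>\<omega>. exp (- t * Z a b c \<omega>) \<partial>M)
      = exp (X.cgf (t * a\<^sup>2) + X.cgf (t * b\<^sup>2) + X.cgf (t * c\<^sup>2) - 2 * T)"
    using expectation_exp_neg_Z[of t a b c] t moments(1) by (simp flip: distrib_left)
  have rhs: "(\<integral>\<omega>. exp (- t * Z 0 \<kappa> (- \<kappa>) \<omega>) \<partial>M) = exp (X.cgf 0 + 2 * X.cgf T - 2 * T)"
    using expectation_exp_neg_Z[of t 0 \<kappa> "- \<kappa>"] t by (simp add: T_def)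
  show "(\<integral>\<omega>. exp (- t * Z a b c \<omega>) \<partial>M) \<le> (\<integral>\<omega>. exp (- t * Z 0 \<kappa> (- \<kappa>) \<omega>) \<partial>M)"
    unfolding lhs rhs using X.cgf_sum3_le(1)[OF T nonneg moments] by simp
  assume "a \<noteq> 0" "b \<noteq> 0" "c \<noteq> 0"
  then show "(\<integral>\<omega>. exp (- t * Z a b c \<omega>) \<partial>M) < (\<integral>\<omega>. exp (- t * Z 0 \<kappa> (- \<kappa>) \<omega>) \<partial>M)"
    unfolding lhs rhs using X.cgf_sum3_le(2)[OF T nonneg moments] t by simp
qed

lemma mult_Z_le:
  assumes "\<omega> \<in> space M" and "0 \<le> t" and "2 * (a\<^sup>2 + b\<^sup>2 + c\<^sup>2) \<le> A"
  shows "t * Z a b c \<omega> \<le> t * A"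
  using Z_bounds(2)[OF assms(1), of a b c] assms(2,3) by (intro mult_left_mono) auto

lemma exp_neg_le_expectation_exp_neg_Z:
  assumes "0 \<le> t" and "2 * (a\<^sup>2 + b\<^sup>2 + c\<^sup>2) \<le> A"
  shows "exp (- t * A) \<le> (\<integral>\<omega>. exp (- t * Z a b c \<omega>) \<partial>M)"
proof -
  have "(\<integral>\<omega>. exp (- t * A) \<partial>M) \<le> (\<integral>\<omega>. exp (- t * Z a b c \<omega>) \<partial>M)"
    using assms mult_Z_le integrable_exp_neg_Z[OF assms(1)] by (intro integral_mono) auto
  then show ?thesis
    by (simp add: prob_space)
qed

definition laplace_gap :: "real \<Rightarrow> real \<Rightarrow> real \<Rightarrow> real \<Rightarrow> real \<Rightarrow> ennreal" where
  "laplace_gap A a b c t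
    = ennreal (((\<integral>\<omega>. exp (- t * Z a b c \<omega>) \<partial>M) - exp (- t * A)) / t) * indicator {0<..} t"

lemma measurable_laplace_gap [measurable]: "laplace_gap A a b c \<in> borel_measurable borel"
  unfolding laplace_gap_def by measurable

lemma nn_integral_frullani_integrand:
  assumes "0 < t" and "2 * (a\<^sup>2 + b\<^sup>2 + c\<^sup>2) \<le> A"
  shows "(\<integral>\<^sup>+\<omega>. ennreal ((exp (- t * Z a b c \<omega>) - exp (- t * A)) / t) \<partial>M)
    = ennreal (((\<integral>\<omega>. exp (- t * Z a b c \<omega>) \<partial>M) - exp (- t * A)) / t)"
proof -
  have "(\<integral>\<^sup>+\<omega>. ennreal ((exp (- t * Z a b c \<omega>) - exp (- t * A)) / t) \<partial>M)
      = ennreal (\<integral>\<omega>. (exp (- t * Z a b c \<omega>) - exp (- t * A)) / t \<partial>M)"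
  proof (rule nn_integral_eq_integral)
    show "integrable M (\<lambda>\<omega>. (exp (- t * Z a b c \<omega>) - exp (- t * A)) / t)"
      using integrable_exp_neg_Z[of t a b c] assms(1) by simp
    show "AE \<omega> in M. 0 \<le> (exp (- t * Z a b c \<omega>) - exp (- t * A)) / t"
      using assms mult_Z_le[of _ t] by (intro AE_I2) (auto intro: divide_nonneg_pos)
  qed
  also have "(\<integral>\<omega>. (exp (- t * Z a b c \<omega>) - exp (- t * A)) / t \<partial>M)
      = ((\<integral>\<omega>. exp (- t * Z a b c \<omega>) \<partial>M) - exp (- t * A)) / t"
    using integrable_exp_neg_Z[of t a b c] assms(1) by (simp add: prob_space)
  finally show ?thesis .
qed

lemma nn_integral_log_gap_eq_laplace_gap:
  assumes "0 < a\<^sup>2 + b\<^sup>2 + c\<^sup>2" and "2 * (a\<^sup>2 + b\<^sup>2 + c\<^sup>2) \<le> A"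
  shows "(\<integral>\<^sup>+\<omega>. ennreal (ln A - ln (Z a b c \<omega>)) \<partial>M) = (\<integral>\<^sup>+t. laplace_gap A a b c t \<partial>lborel)"
proof -
  have "(\<integral>\<^sup>+\<omega>. ennreal (ln A - ln (Z a b c \<omega>)) \<partial>M) = (\<integral>\<^sup>+\<omega>. (\<integral>\<^sup>+t.
      ennreal ((exp (- t * Z a b c \<omega>) - exp (- t * A)) / t) * indicator {0<..} t \<partial>lborel) \<partial>M)"
  proof (intro nn_integral_cong_AE)
    show "AE \<omega> in M. ennreal (ln A - ln (Z a b c \<omega>)) = (\<integral>\<^sup>+t.
        ennreal ((exp (- t * Z a b c \<omega>) - exp (- t * A)) / t) * indicator {0<..} t \<partial>lborel)"
      using AE_Z_pos[OF assms(1)] AE_space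
    proof eventually_elim
      case (elim \<omega>)
      then show ?case
        using frullani_exp[of "Z a b c \<omega>" A] mult_Z_le[OF elim(2) _ assms(2), of 1] by simp
    qed
  qed
  also have "\<dots> = (\<integral>\<^sup>+t. (\<integral>\<^sup>+\<omega>.
      ennreal ((exp (- t * Z a b c \<omega>) - exp (- t * A)) / t) * indicator {0<..} t \<partial>M) \<partial>lborel)"
    by (intro pair_sigma_finite.Fubini'[symmetric])
      (simp_all add: pair_sigma_finite_def lborel.sigma_finite_measure_axioms sigma_finite_measure_axioms)
  also have "\<dots> = (\<integral>\<^sup>+t. laplace_gap A a b c t \<partial>lborel)"
    using nn_integral_frullani_integrand[OF _ assms(2)]
    by (intro nn_integral_cong) (simp add: laplace_gap_def nn_integral_multc split: split_indicator)
  finally show ?thesis .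
qed

lemma Flog_eq_ln_minus_laplace_gap:
  assumes "0 < a\<^sup>2 + b\<^sup>2 + c\<^sup>2" and "2 * (a\<^sup>2 + b\<^sup>2 + c\<^sup>2) \<le> A"
  shows "Flog M X a b c = ereal (ln A) - enn2ereal (\<integral>\<^sup>+t. laplace_gap A a b c t \<partial>lborel)"
proof -
  have "Flog M X a b c = ext_expectation M (\<lambda>\<omega>. ln (Z a b c \<omega>))"
    by (simp add: Flog_def Z_def)
  also have "\<dots> = ereal (ln A) - enn2ereal (\<integral>\<^sup>+\<omega>. ennreal (ln A - ln (Z a b c \<omega>)) \<partial>M)"
  proof (intro ext_expectation_bounded_above[OF prob_space_M])
    show "AE \<omega> in M. ln (Z a b c \<omega>) \<le> ln A"
      using AE_Z_pos[OF assms(1)] AE_space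
    proof eventually_elim
      case (elim \<omega>)
      then show ?case
        using mult_Z_le[OF elim(2) _ assms(2), of 1] by (subst ln_le_cancel_iff) auto
    qed
  qed measurable
  finally show ?thesis
    unfolding nn_integral_log_gap_eq_laplace_gap[OF assms] .
qed

lemma laplace_gap_mono:
  assumes "\<kappa> \<noteq> 0" and "a + b + c = 0" and "a\<^sup>2 + b\<^sup>2 + c\<^sup>2 = 2 * \<kappa>\<^sup>2"
  shows "laplace_gap A a b c t \<le> laplace_gap A 0 \<kappa> (- \<kappa>) t"
  using expectation_exp_neg_Z_le(1)[OF assms, of t]
  by (auto simp: laplace_gap_def divide_right_mono ennreal_leI split: split_indicator)

lemma nn_integral_laplace_gap_le:
  assumes "\<kappa> \<noteq> 0" and "a + b + c = 0" and "a\<^sup>2 + b\<^sup>2 + c\<^sup>2 = 2 * \<kappa>\<^sup>2"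
  shows "(\<integral>\<^sup>+t. laplace_gap A a b c t \<partial>lborel) \<le> (\<integral>\<^sup>+t. laplace_gap A 0 \<kappa> (- \<kappa>) t \<partial>lborel)"
  using laplace_gap_mono[OF assms] by (intro nn_integral_mono)

lemma nn_integral_laplace_gap_less:
  assumes "\<kappa> \<noteq> 0" and "a + b + c = 0" and "a\<^sup>2 + b\<^sup>2 + c\<^sup>2 = 2 * \<kappa>\<^sup>2" and "2 * (a\<^sup>2 + b\<^sup>2 + c\<^sup>2) \<le> A"
    and "a \<noteq> 0" "b \<noteq> 0" "c \<noteq> 0"
    and finite: "(\<integral>\<^sup>+t. laplace_gap A 0 \<kappa> (- \<kappa>) t \<partial>lborel) \<noteq> \<infinity>"
  shows "(\<integral>\<^sup>+t. laplace_gap A a b c t \<partial>lborel) < (\<integral>\<^sup>+t. laplace_gap A 0 \<kappa> (- \<kappa>) t \<partial>lborel)"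
proof (rule nn_integral_less)
  show "(\<integral>\<^sup>+t. laplace_gap A a b c t \<partial>lborel) \<noteq> \<infinity>"
    using nn_integral_laplace_gap_le[OF assms(1-3), of A] finite by (auto simp: top_unique)
  have less: "laplace_gap A a b c t < laplace_gap A 0 \<kappa> (- \<kappa>) t" if "0 < t" for t
    using that expectation_exp_neg_Z_le(2)[OF assms(1-3) that assms(5-7)]
      exp_neg_le_expectation_exp_neg_Z[OF less_imp_le[OF that] assms(4)]
    by (auto simp: laplace_gap_def divide_strict_right_mono intro!: ennreal_lessI)
  show "\<not> (AE t in lborel. laplace_gap A 0 \<kappa> (- \<kappa>) t \<le> laplace_gap A a b c t)"
  proof
    assume "AE t in lborel. laplace_gap A 0 \<kappa> (- \<kappa>) t \<le> laplace_gap A a b c t"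
    then have "AE t in lborel. t \<notin> {0<..<1::real}"
      by eventually_elim (use less in \<open>force simp: not_le[symmetric]\<close>)
    then have "{0<..<1::real} \<in> null_sets lborel"
      by (subst AE_iff_null_sets) auto
    then have "emeasure lborel {0<..<1::real} = 0"
      by auto
    then show False
      by simp
  qed
qed (use laplace_gap_mono[OF assms(1-3)] in auto)

end

theorem theorem5p1:
  fixes M :: "'a measure" and X :: "nat \<Rightarrow> 'a \<Rightarrow> real" and f :: "real \<Rightarrow> real"
    and \<kappa> a b c :: real
  assumes "prob_space M"
    and "prob_space.indep_vars M (\<lambda>_. borel) X {0, 1, 2}"
    and "\<And>i. i \<in> {0, 1, 2} \<Longrightarrow> distributed M lborel (X i) (\<lambda>x. ennreal (f x))"
    and "\<And>i \<omega>. i \<in> {0, 1, 2} \<Longrightarrow> \<omega> \<in> space M \<Longrightarrow> X i \<omega> \<in> {-1..1}"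
    and "\<And>x. x \<in> {-1..1} \<Longrightarrow> f x \<ge> 0"
    and "\<And>x. x \<in> {-1..1} \<Longrightarrow> f x = f (- x)"
    and "strict_mono_on {0..1} f"
    and "\<kappa> \<noteq> 0"
    and "a + b + c = 0"
    and "a\<^sup>2 + b\<^sup>2 + c\<^sup>2 = 2 * \<kappa>\<^sup>2"
  shows "Flog M X a b c \<ge> Flog M X 0 \<kappa> (- \<kappa>) \<and>
         (a \<noteq> 0 \<and> b \<noteq> 0 \<and> c \<noteq> 0 \<and> Flog M X 0 \<kappa> (- \<kappa>) > - \<infinity>
           \<longrightarrow> Flog M X a b c > Flog M X 0 \<kappa> (- \<kappa>))"
proof -
  interpret symmetric_increasing_iid3 M X f
    using assms(1-7) by (rule symmetric_increasing_iid3.intro)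
  define A where "A = 4 * \<kappa>\<^sup>2"
  define I I\<^sub>0 where "I = (\<integral>\<^sup>+t. laplace_gap A a b c t \<partial>lborel)"
    and "I\<^sub>0 = (\<integral>\<^sup>+t. laplace_gap A 0 \<kappa> (- \<kappa>) t \<partial>lborel)"
  have F: "Flog M X a b c = ereal (ln A) - enn2ereal I"
    and F\<^sub>0: "Flog M X 0 \<kappa> (- \<kappa>) = ereal (ln A) - enn2ereal I\<^sub>0"
    using assms(8,10) unfolding I_def I\<^sub>0_def
    by (intro Flog_eq_ln_minus_laplace_gap; simp add: A_def)+
  have "I \<le> I\<^sub>0"
    unfolding I_def I\<^sub>0_def using assms(8-10) by (rule nn_integral_laplace_gap_le)
  moreover have "I < I\<^sub>0" if "a \<noteq> 0" "b \<noteq> 0" "c \<noteq> 0" "I\<^sub>0 \<noteq> \<infinity>"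
    using assms(8-10) that unfolding I_def I\<^sub>0_def
    by (intro nn_integral_laplace_gap_less) (simp_all add: A_def)
  ultimately show ?thesis
    unfolding F F\<^sub>0 using enn2ereal_nonneg[of I] enn2ereal_eq_top_iff[of "I\<^sub>0"]
    by (cases "enn2ereal I"; cases "enn2ereal I\<^sub>0")
      (auto simp: less_eq_ennreal.rep_eq less_ennreal.rep_eq)
qed

end
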